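(* Let $X$ be an irreducible finite dimensional CAT(0) cube complex. For any infinite descending chain $s_1\supsetneq s_2\supsetneq\cdots$ of pairwise strongly separated half-spaces, $\bigcap_n s_n\subset\overline X$ is a single point. In particular, if $\xi_1\ne\xi_2$ are in $\partial_rX$, then there are disjoint strongly separated half-spaces $h_1,h_2$ with $\xi_1\in h_1$ and $\xi_2\in h_2$.
   Context: Conventions. $X$ is a finite-dimensional, second countable CAT(0) cube complex identified with its vertex set. $\mathfrak H$ is the set of half-spaces, $h^*=X\setminus h$; $U_v=\{h:v\in h\}$; Roller compactification $\overline X$ = closure of $\{U_v\}$ in $2^{\mathfrak H}$ (product topology), $\partial X=\overline X\setminus X$; each $\xi\in\overline X$ is a subset $U_\xi$, and $h$ is regarded as the subset $\{\xi:h\in U_\xi\}$ of $\overline X$. Transverse: $h\cap k,h\cap k^*,h^*\cap k,h^*\cap k^*$ all nonempty; strongly separated: no half-space transverse to both. Irreducible: not a nontrivial product. Regular points $\partial_rX$ (irreducible $X$): $\xi\in\partial X$ such that for all $h_1,h_2\in U_\xi$ there is $k\in U_\xi$ with $k\subset h_1\cap h_2$ strongly separated from both. *)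

theory Defs
  imports Main "HOL-Library.Countable_Set"
begin

text \<open>A (finite-dimensional) CAT(0) cube complex is modelled by its 1-skeleton, which is a
median graph (Chepoi/Roller/Gerasimov): vertex set V, symmetric irreflexive adjacency E.\<close>

definition is_walk :: "('v \<Rightarrow> 'v \<Rightarrow> bool) \<Rightarrow> 'v list \<Rightarrow> bool" where
  "is_walk E xs \<longleftrightarrow> xs \<noteq> [] \<and> (\<forall>i. Suc i < length xs \<longrightarrow> E (xs ! i) (xs ! Suc i))"

definition gdist :: "('v \<Rightarrow> 'v \<Rightarrow> bool) \<Rightarrow> 'v \<Rightarrow> 'v \<Rightarrow> nat" where
  "gdist E u v = (LEAST n. \<exists>xs. is_walk E xs \<and> hd xs = u \<and> last xs = v \<and> length xs = Suc n)"

definition is_graph :: "'v set \<Rightarrow> ('v \<Rightarrow> 'v \<Rightarrow> bool) \<Rightarrow> bool" where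
  "is_graph V E \<longleftrightarrow> (\<forall>u v. E u v \<longrightarrow> u \<in> V \<and> v \<in> V \<and> E v u \<and> u \<noteq> v)"

definition graph_connected :: "'v set \<Rightarrow> ('v \<Rightarrow> 'v \<Rightarrow> bool) \<Rightarrow> bool" where
  "graph_connected V E \<longleftrightarrow>
     (\<forall>u\<in>V. \<forall>v\<in>V. \<exists>xs. is_walk E xs \<and> hd xs = u \<and> last xs = v)"

definition interval :: "'v set \<Rightarrow> ('v \<Rightarrow> 'v \<Rightarrow> bool) \<Rightarrow> 'v \<Rightarrow> 'v \<Rightarrow> 'v set" where
  "interval V E x y = {w \<in> V. gdist E x w + gdist E w y = gdist E x y}"

definition median_graph :: "'v set \<Rightarrow> ('v \<Rightarrow> 'v \<Rightarrow> bool) \<Rightarrow> bool" where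
  "median_graph V E \<longleftrightarrow> V \<noteq> {} \<and> is_graph V E \<and> graph_connected V E \<and>
     (\<forall>x\<in>V. \<forall>y\<in>V. \<forall>z\<in>V. \<exists>!m. m \<in> interval V E x y \<inter> interval V E y z \<inter> interval V E x z)"

text \<open>Half-spaces: the two sides of each hyperplane (edge class).\<close>
definition halfspaces :: "'v set \<Rightarrow> ('v \<Rightarrow> 'v \<Rightarrow> bool) \<Rightarrow> 'v set set" where
  "halfspaces V E = {{w \<in> V. gdist E w u < gdist E w v} | u v. E u v}"

definition transverse :: "'v set \<Rightarrow> 'v set \<Rightarrow> 'v set \<Rightarrow> bool" where
  "transverse V h k \<longleftrightarrow> h \<inter> k \<noteq> {} \<and> h \<inter> (V - k) \<noteq> {} \<and> (V - h) \<inter> k \<noteq> {}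
      \<and> (V - h) \<inter> (V - k) \<noteq> {}"

definition strongly_separated :: "'v set \<Rightarrow> ('v \<Rightarrow> 'v \<Rightarrow> bool) \<Rightarrow> 'v set \<Rightarrow> 'v set \<Rightarrow> bool" where
  "strongly_separated V E h k \<longleftrightarrow>
     \<not> (\<exists>m \<in> halfspaces V E. transverse V m h \<and> transverse V m k)"

text \<open>Finite dimension: a uniform bound on families of pairwise transverse half-spaces
(= number of pairwise transverse hyperplanes = dimension of cubes).\<close>
definition finite_dimensional :: "'v set \<Rightarrow> ('v \<Rightarrow> 'v \<Rightarrow> bool) \<Rightarrow> bool" where
  "finite_dimensional V E \<longleftrightarrow> (\<exists>n::nat. \<forall>F \<subseteq> halfspaces V E.
      (\<forall>h\<in>F. \<forall>k\<in>F. h \<noteq> k \<longrightarrow> transverse V h k) \<longrightarrow> finite F \<and> card F \<le> n)"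

text \<open>Cartesian product of graphs; X is reducible iff its 1-skeleton is isomorphic to the
Cartesian product of two graphs with at least two vertices each (the factors can be taken
to be subgraphs of X, namely fibres, so they live in the same vertex type).\<close>
definition cart_prod_adj :: "('v \<Rightarrow> 'v \<Rightarrow> bool) \<Rightarrow> ('v \<Rightarrow> 'v \<Rightarrow> bool) \<Rightarrow> 'v \<times> 'v \<Rightarrow> 'v \<times> 'v \<Rightarrow> bool" where
  "cart_prod_adj E1 E2 p q \<longleftrightarrow>
     (E1 (fst p) (fst q) \<and> snd p = snd q) \<or> (fst p = fst q \<and> E2 (snd p) (snd q))"

definition irreducible_cc :: "'v set \<Rightarrow> ('v \<Rightarrow> 'v \<Rightarrow> bool) \<Rightarrow> bool" where
  "irreducible_cc V E \<longleftrightarrow> \<not> (\<exists>(A::'v set) (B::'v set) E1 E2 f.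
      is_graph A E1 \<and> is_graph B E2 \<and>
      (\<exists>a1\<in>A. \<exists>a2\<in>A. a1 \<noteq> a2) \<and> (\<exists>b1\<in>B. \<exists>b2\<in>B. b1 \<noteq> b2) \<and>
      bij_betw f V (A \<times> B) \<and>
      (\<forall>u\<in>V. \<forall>v\<in>V. E u v \<longleftrightarrow> cart_prod_adj E1 E2 (f u) (f v)))"

text \<open>Roller compactification: closure of {U_v} in 2^H with the product topology,
unfolded: U is in the closure iff it agrees with some U_v on every finite set of half-spaces.\<close>
definition Uv :: "'v set \<Rightarrow> ('v \<Rightarrow> 'v \<Rightarrow> bool) \<Rightarrow> 'v \<Rightarrow> 'v set set" where
  "Uv V E v = {h \<in> halfspaces V E. v \<in> h}"

definition roller :: "'v set \<Rightarrow> ('v \<Rightarrow> 'v \<Rightarrow> bool) \<Rightarrow> 'v set set set" where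
  "roller V E = {U. U \<subseteq> halfspaces V E \<and>
      (\<forall>F. finite F \<and> F \<subseteq> halfspaces V E \<longrightarrow> (\<exists>v\<in>V. U \<inter> F = Uv V E v \<inter> F))}"

definition roller_boundary :: "'v set \<Rightarrow> ('v \<Rightarrow> 'v \<Rightarrow> bool) \<Rightarrow> 'v set set set" where
  "roller_boundary V E = roller V E - Uv V E ` V"

definition hs_ext :: "'v set \<Rightarrow> ('v \<Rightarrow> 'v \<Rightarrow> bool) \<Rightarrow> 'v set \<Rightarrow> 'v set set set" where
  "hs_ext V E h = {U \<in> roller V E. h \<in> U}"

definition regular_points :: "'v set \<Rightarrow> ('v \<Rightarrow> 'v \<Rightarrow> bool) \<Rightarrow> 'v set set set" where
  "regular_points V E = {\<xi> \<in> roller_boundary V E. \<forall>h1\<in>\<xi>. \<forall>h2\<in>\<xi>. \<exists>k\<in>\<xi>.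
      k \<subseteq> h1 \<inter> h2 \<and> strongly_separated V E k h1 \<and> strongly_separated V E k h2}"

end

theory Submission
  imports Defs
begin

text \<open>Half-spaces are the sides \<open>W(a, b)\<close> of edges \<open>ab\<close>; they are convex, so a half-space is
  determined by any edge crossing it. Hence a strictly descending chain of half-spaces has empty
  intersection: a shortest path from a common vertex to a vertex outside \<open>s\<^sub>0\<close> would have to
  cross infinitely many of them. If consecutive members are strongly separated, then every
  half-space \<open>h\<close> eventually contains the chain or is disjoint from it, for otherwise \<open>h\<close> would be
  transverse to two consecutive members. Therefore the half-spaces containing some \<open>s\<^sub>n\<close> form the
  unique point of the Roller compactification lying in every \<open>s\<^sub>n\<close>.

  Two distinct regular points are separated by some \<open>h\<close>; regularity yields \<open>k\<^sub>1 \<subseteq> h\<close> strongly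
  separated from \<open>h\<close> around the first and \<open>k\<^sub>2 \<subseteq> V - h\<close> around the second, and a half-space
  transverse to both \<open>k\<^sub>1\<close> and \<open>k\<^sub>2\<close> would be transverse to \<open>h\<close>.\<close>

lemma is_walk_Cons:
  "is_walk E (x # xs) \<longleftrightarrow> xs = [] \<or> (E x (hd xs) \<and> is_walk E xs)"
  by (cases xs) (auto simp: is_walk_def nth_Cons' less_Suc_eq_0_disj All_less_Suc2 split: if_splits)

lemma is_walk_append:
  "is_walk E xs \<Longrightarrow> is_walk E ys \<Longrightarrow> last xs = hd ys \<Longrightarrow> is_walk E (xs @ tl ys)"
proof (induction xs)
  case Nil
  then show ?case by (simp add: is_walk_def)
next
  case (Cons x xs)
  show ?case
  proof (cases "xs = []")
    case True
    then show ?thesis using Cons.prems by (cases ys) (auto simp: is_walk_def)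
  next
    case False
    then have "E x (hd xs)" "is_walk E xs" using Cons.prems(1) is_walk_Cons by metis+
    then show ?thesis using Cons False by (simp add: is_walk_Cons)
  qed
qed

lemma is_walk_rev:
  assumes "is_walk E xs" and sym: "\<And>u v. E u v \<Longrightarrow> E v u"
  shows "is_walk E (rev xs)"
  unfolding is_walk_def
proof (intro conjI allI impI)
  show "rev xs \<noteq> []" using assms(1) by (simp add: is_walk_def)
  fix i assume i: "Suc i < length (rev xs)"
  define j where "j = length xs - Suc (Suc i)"
  have "E (xs ! j) (xs ! Suc j)"
    using assms(1) i unfolding is_walk_def j_def by simp
  moreover have "rev xs ! i = xs ! Suc j" "rev xs ! Suc i = xs ! j"
    using i by (simp_all add: rev_nth j_def Suc_diff_Suc)
  ultimately show "E (rev xs ! i) (rev xs ! Suc i)" using sym by simp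
qed

lemma gdist_le_walk:
  assumes "is_walk E xs" "hd xs = u" "last xs = v"
  shows "gdist E u v \<le> length xs - 1"
  unfolding gdist_def
  by (rule Least_le) (use assms in \<open>auto simp: is_walk_def\<close>)

lemma gdist_self [simp]: "gdist E u u = 0"
  using gdist_le_walk[of E "[u]" u u] by (simp add: is_walk_def)

definition halfspace :: "'v set \<Rightarrow> ('v \<Rightarrow> 'v \<Rightarrow> bool) \<Rightarrow> 'v \<Rightarrow> 'v \<Rightarrow> 'v set" where
  "halfspace V E a b = {w \<in> V. gdist E w a < gdist E w b}"

lemma halfspaces_eq: "halfspaces V E = {halfspace V E a b | a b. E a b}"
  unfolding halfspaces_def halfspace_def by blast

lemma halfspaces_subset: "h \<in> halfspaces V E \<Longrightarrow> h \<subseteq> V"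
  by (auto simp: halfspaces_def)

lemma transverse_if_transverse_both_sides:
  assumes "k1 \<subseteq> h" "k2 \<subseteq> V - h" "transverse V m k1" "transverse V m k2"
  shows "transverse V m h"
  using assms unfolding transverse_def by blast

lemma strongly_separated_commute:
  "strongly_separated V E h k \<longleftrightarrow> strongly_separated V E k h"
  unfolding strongly_separated_def by blast

lemma strongly_separated_if_opposite_sides:
  assumes "k1 \<subseteq> h" "k2 \<subseteq> V - h" "strongly_separated V E k1 h"
  shows "strongly_separated V E k1 k2"
  using assms transverse_if_transverse_both_sides unfolding strongly_separated_def by metis

lemma regular_point_strongly_separated_subset:
  assumes "\<xi> \<in> regular_points V E" "h \<in> \<xi>"
  obtains k where "k \<in> \<xi>" "k \<subseteq> h" "strongly_separated V E k h"
  using assms unfolding regular_points_def by blast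

definition chain_limit :: "'v set \<Rightarrow> ('v \<Rightarrow> 'v \<Rightarrow> bool) \<Rightarrow> (nat \<Rightarrow> 'v set) \<Rightarrow> 'v set set" where
  "chain_limit V E s = {h \<in> halfspaces V E. \<exists>n. s n \<subseteq> h}"

context
  fixes V :: "'v set" and E :: "'v \<Rightarrow> 'v \<Rightarrow> bool"
  assumes median: "median_graph V E"
begin

lemma edge_sym: "E u v \<Longrightarrow> E v u"
  and edge_in_V: "E u v \<Longrightarrow> u \<in> V \<and> v \<in> V"
  and edge_neq: "E u v \<Longrightarrow> u \<noteq> v"
  using median by (simp_all add: median_graph_def is_graph_def)

lemma shortest_walk_exists:
  assumes "u \<in> V" "v \<in> V"
  obtains xs where "is_walk E xs" "hd xs = u" "last xs = v" "length xs = Suc (gdist E u v)"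
proof -
  obtain xs where xs: "is_walk E xs" "hd xs = u" "last xs = v"
    using median assms unfolding median_graph_def graph_connected_def by blast
  then have "\<exists>n ys. is_walk E ys \<and> hd ys = u \<and> last ys = v \<and> length ys = Suc n"
    by (intro exI[of _ "length xs - 1"] exI[of _ xs]) (auto simp: is_walk_def)
  then have "\<exists>ys. is_walk E ys \<and> hd ys = u \<and> last ys = v \<and> length ys = Suc (gdist E u v)"
    unfolding gdist_def by (rule LeastI_ex)
  then show ?thesis using that by blast
qed

lemma gdist_eq_0D:
  assumes "u \<in> V" "v \<in> V" "gdist E u v = 0"
  shows "u = v"
proof -
  obtain xs where "hd xs = u" "last xs = v" "length xs = Suc 0"
    using shortest_walk_exists[OF assms(1,2)] assms(3) by metis
  then show ?thesis by (auto simp: length_Suc_conv)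
qed

lemma gdist_edge:
  assumes "E u v"
  shows "gdist E u v = 1"
proof -
  have "gdist E u v \<le> 1"
    using gdist_le_walk[of E "[u, v]" u v] assms by (simp add: is_walk_def)
  moreover have "gdist E u v \<noteq> 0"
    using gdist_eq_0D edge_in_V[OF assms] edge_neq[OF assms] by blast
  ultimately show ?thesis by simp
qed

lemma gdist_triangle:
  assumes "x \<in> V" "y \<in> V" "z \<in> V"
  shows "gdist E x z \<le> gdist E x y + gdist E y z"
proof -
  obtain xs where xs: "is_walk E xs" "hd xs = x" "last xs = y" "length xs = Suc (gdist E x y)"
    using shortest_walk_exists[OF assms(1,2)] by blast
  obtain ys where ys: "is_walk E ys" "hd ys = y" "last ys = z" "length ys = Suc (gdist E y z)"
    using shortest_walk_exists[OF assms(2,3)] by blast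
  have ne: "xs \<noteq> []" "ys \<noteq> []" using xs(4) ys(4) by auto
  have "last (xs @ tl ys) = z"
  proof (cases "tl ys = []")
    case True
    then have "ys = [y]" using ne(2) ys(2) by (cases ys) auto
    then show ?thesis using xs(3) ys(3) True by simp
  next
    case False
    then show ?thesis using ys(3) ne(2) by (simp add: last_tl)
  qed
  moreover have "hd (xs @ tl ys) = x" using xs(2) ne(1) by simp
  ultimately have "gdist E x z \<le> length (xs @ tl ys) - 1"
    using gdist_le_walk is_walk_append xs ys by metis
  then show ?thesis using xs ys by simp
qed

lemma gdist_commute:
  assumes "x \<in> V" "y \<in> V"
  shows "gdist E x y = gdist E y x"
proof -
  have "gdist E y x \<le> gdist E x y" if xy: "x \<in> V" "y \<in> V" for x y
  proof -
    obtain xs where xs: "is_walk E xs" "hd xs = x" "last xs = y" "length xs = Suc (gdist E x y)"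
      using shortest_walk_exists[OF xy] by blast
    then have "xs \<noteq> []" by auto
    then show ?thesis
      using gdist_le_walk[of E "rev xs" y x] is_walk_rev[OF xs(1) edge_sym] xs
      by (simp add: hd_rev last_rev)
  qed
  then show ?thesis using assms by (simp add: le_antisym)
qed

lemma gdist_first_step:
  assumes "u \<in> V" "z \<in> V" "u \<noteq> z"
  obtains p where "E u p" "gdist E p z + 1 = gdist E u z"
proof -
  obtain xs where xs: "is_walk E xs" "hd xs = u" "last xs = z" "length xs = Suc (gdist E u z)"
    using shortest_walk_exists[OF assms(1,2)] by blast
  then obtain p rest where xs_eq: "xs = u # p # rest"
    using assms(3) by (cases xs; cases "tl xs") auto
  then have up: "E u p" and walk: "is_walk E (p # rest)"
    using xs(1) is_walk_Cons by (metis list.distinct(1) list.sel(1))+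
  have "gdist E p z \<le> length (p # rest) - 1"
    using gdist_le_walk[OF walk] xs(3) xs_eq by simp
  moreover have "gdist E u z \<le> gdist E u p + gdist E p z"
    using gdist_triangle assms edge_in_V up by blast
  ultimately show ?thesis using that up gdist_edge xs xs_eq by simp
qed

lemma mem_interval:
  "w \<in> interval V E x y \<longleftrightarrow> w \<in> V \<and> gdist E x w + gdist E w y = gdist E x y"
  by (simp add: interval_def)

lemma interval_commute: "x \<in> V \<Longrightarrow> y \<in> V \<Longrightarrow> interval V E x y = interval V E y x"
  by (auto simp: mem_interval gdist_commute)

lemma interval_trans:
  assumes "u \<in> V" "w \<in> V" "y \<in> interval V E u v" "v \<in> interval V E u w"
  shows "y \<in> interval V E u w" "v \<in> interval V E y w"
proof -
  have "y \<in> V" "v \<in> V" using assms by (auto simp: mem_interval)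
  then have "gdist E y w \<le> gdist E y v + gdist E v w" "gdist E u w \<le> gdist E u y + gdist E y w"
    using gdist_triangle assms by blast+
  then show "y \<in> interval V E u w" "v \<in> interval V E y w"
    using assms \<open>y \<in> V\<close> \<open>v \<in> V\<close> by (auto simp: mem_interval)
qed

lemma interval_first_step:
  assumes "u \<in> V" "w \<in> V" "z \<in> interval V E u w" "u \<noteq> z"
  obtains p where "E u p" "gdist E p z + 1 = gdist E u z"
    "z \<in> interval V E p w" "gdist E p w + 1 = gdist E u w"
proof -
  have "z \<in> V" using assms(3) by (simp add: mem_interval)
  then obtain p where p: "E u p" "gdist E p z + 1 = gdist E u z"
    using gdist_first_step assms by blast
  then have "p \<in> V" using edge_in_V by blast
  then have "gdist E p w \<le> gdist E p z + gdist E z w" "gdist E u w \<le> gdist E u p + gdist E p w"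
    using gdist_triangle assms \<open>z \<in> V\<close> by blast+
  then show ?thesis
    using that p assms(3) \<open>p \<in> V\<close> gdist_edge[OF p(1)] by (simp add: mem_interval)
qed

lemma median_exists:
  assumes "x \<in> V" "y \<in> V" "z \<in> V"
  obtains m where "m \<in> interval V E x y" "m \<in> interval V E y z" "m \<in> interval V E x z"
  using median assms unfolding median_graph_def by blast

lemma median_unique:
  assumes "x \<in> V" "y \<in> V" "z \<in> V"
    and "m \<in> interval V E x y" "m \<in> interval V E y z" "m \<in> interval V E x z"
    and "m' \<in> interval V E x y" "m' \<in> interval V E y z" "m' \<in> interval V E x z"
  shows "m = m'"
  using median assms unfolding median_graph_def by blast

lemma gdist_edge_ends:
  assumes ab: "E a b" and w: "w \<in> V"
  shows "gdist E w b = gdist E w a + 1 \<or> gdist E w a = gdist E w b + 1"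
proof -
  have V: "a \<in> V" "b \<in> V" using edge_in_V ab by auto
  obtain m where m: "m \<in> interval V E w a" "m \<in> interval V E a b" "m \<in> interval V E w b"
    using median_exists w V by blast
  then have "m \<in> V" "gdist E a m + gdist E m b = 1"
    using gdist_edge[OF ab] by (auto simp: mem_interval)
  then have "gdist E a m = 0 \<or> gdist E m b = 0" by linarith
  then have "m = a \<or> m = b" using gdist_eq_0D V \<open>m \<in> V\<close> by blast
  then show ?thesis
  proof
    assume "m = a"
    then show ?thesis using m(3) gdist_edge[OF ab] by (simp add: mem_interval)
  next
    assume "m = b"
    then show ?thesis using m(1) gdist_edge[OF edge_sym[OF ab]] by (simp add: mem_interval)
  qed
qed

lemma Diff_halfspace: "E a b \<Longrightarrow> V - halfspace V E a b = halfspace V E b a"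
  using gdist_edge_ends unfolding halfspace_def by fastforce

lemma halfspace_iff_interval:
  "E a b \<Longrightarrow> w \<in> V \<Longrightarrow> w \<in> halfspace V E a b \<longleftrightarrow> a \<in> interval V E w b"
  using gdist_edge_ends[of a b w] gdist_edge[of a b] edge_in_V[of a b]
  unfolding halfspace_def mem_interval by auto

lemma Diff_halfspaces: "h \<in> halfspaces V E \<Longrightarrow> V - h \<in> halfspaces V E"
  using Diff_halfspace edge_sym unfolding halfspaces_eq by blast

lemma halfspaces_nonempty: "h \<in> halfspaces V E \<Longrightarrow> h \<noteq> {}"
  using gdist_edge edge_in_V unfolding halfspaces_eq halfspace_def by fastforce

lemma halfspace_exit_edge:
  assumes ab: "E a b" and "u \<in> halfspace V E a b" "E u p" "p \<notin> halfspace V E a b"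
  shows "p \<in> interval V E u b"
proof -
  have V: "u \<in> V" "p \<in> V" "a \<in> V" "b \<in> V" using assms edge_in_V by auto
  have "p \<in> halfspace V E b a" using Diff_halfspace[OF ab] assms V by blast
  then have "b \<in> interval V E p a" using halfspace_iff_interval edge_sym ab V by blast
  moreover have "a \<in> interval V E u b" using halfspace_iff_interval ab assms V by blast
  moreover have "gdist E p a \<le> gdist E p u + gdist E u a" "gdist E u b \<le> gdist E u p + gdist E p b"
    using gdist_triangle V by blast+
  ultimately show ?thesis
    using V gdist_edge[OF assms(3)] gdist_edge[OF edge_sym[OF assms(3)]]
      gdist_edge[OF ab] gdist_edge[OF edge_sym[OF ab]]
    by (auto simp: mem_interval)
qed

text \<open>A geodesic from \<open>u\<close> to \<open>w\<close> cannot leave a half-space containing both ends and come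
  back: two medians, of \<open>p, q, b\<close> and of \<open>u, w, a\<close>, would both be the median of \<open>u, w, b\<close>,
  but lie on opposite sides of the hyperplane.\<close>
lemma halfspace_no_reentry:
  assumes ab: "E a b" and u: "u \<in> halfspace V E a b" and w: "w \<in> halfspace V E a b"
    and up: "E u p" "p \<notin> halfspace V E a b" and wq: "E w q" "q \<notin> halfspace V E a b"
    and pq: "gdist E p q + 2 \<le> gdist E u w"
  shows False
proof -
  let ?W = "halfspace V E a b"
  have V: "u \<in> V" "w \<in> V" "p \<in> V" "q \<in> V" "a \<in> V" "b \<in> V"
    using u w up wq ab edge_in_V by (auto simp: halfspace_def)
  obtain x where x: "x \<in> interval V E p q" "x \<in> interval V E q b" "x \<in> interval V E p b"
    using median_exists V by blast
  have "p \<in> interval V E u b" "q \<in> interval V E w b"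
    using halfspace_exit_edge ab u w up wq by blast+
  then have xub: "x \<in> interval V E u b" and xwb: "x \<in> interval V E w b"
    using interval_trans(1)[of b u x p] interval_trans(1)[of b w x q] x V
    by (simp_all add: interval_commute)
  have "x \<in> V" using x by (simp add: mem_interval)
  have "gdist E u x \<le> gdist E u p + gdist E p x" "gdist E x w \<le> gdist E x q + gdist E q w"
    "gdist E u w \<le> gdist E u x + gdist E x w"
    using gdist_triangle V \<open>x \<in> V\<close> by blast+
  moreover have "gdist E u p = 1" "gdist E q w = 1"
    using gdist_edge[OF up(1)] gdist_edge[OF edge_sym[OF wq(1)]] by auto
  moreover have "gdist E p x + gdist E x q = gdist E p q" using x by (simp add: mem_interval)
  ultimately have "gdist E u x + gdist E x w = gdist E u w" using pq by linarith
  then have xuw: "x \<in> interval V E u w" using \<open>x \<in> V\<close> by (simp add: mem_interval)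
  have "p \<in> halfspace V E b a" using Diff_halfspace[OF ab] up V by blast
  then have "b \<in> interval V E x a"
    using interval_trans(2)[of p a x b] x V halfspace_iff_interval[OF edge_sym[OF ab]] by blast
  then have "x \<notin> ?W"
    using halfspace_iff_interval[OF edge_sym[OF ab]] Diff_halfspace[OF ab] \<open>x \<in> V\<close> by blast
  obtain m where m: "m \<in> interval V E u w" "m \<in> interval V E w a" "m \<in> interval V E u a"
    using median_exists V by blast
  have "a \<in> interval V E u b" "a \<in> interval V E w b"
    using halfspace_iff_interval ab u w V by blast+
  then have mub: "m \<in> interval V E u b" and mwb: "m \<in> interval V E w b"
    and "a \<in> interval V E m b"
    using interval_trans m V by blast+
  moreover have "m \<in> V" using m by (simp add: mem_interval)
  ultimately have "m \<in> ?W" using halfspace_iff_interval ab by blast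
  moreover have "x = m"
    using median_unique[of u w b x m] V xuw xwb xub m(1) mub mwb by blast
  ultimately show False using \<open>x \<notin> ?W\<close> by blast
qed

lemma halfspace_convex:
  assumes ab: "E a b"
  shows "u \<in> halfspace V E a b \<Longrightarrow> w \<in> halfspace V E a b \<Longrightarrow> z \<in> interval V E u w
    \<Longrightarrow> z \<in> halfspace V E a b"
proof (induction "gdist E u w" arbitrary: u w z rule: less_induct)
  case less
  let ?W = "halfspace V E a b"
  have V: "u \<in> V" "w \<in> V" "z \<in> V" using less.prems by (auto simp: halfspace_def mem_interval)
  show ?case
  proof (rule ccontr)
    assume z: "z \<notin> ?W"
    then have "u \<noteq> z" "w \<noteq> z" using less.prems by auto
    obtain p where p: "E u p" "gdist E p z + 1 = gdist E u z"
      "z \<in> interval V E p w" "gdist E p w + 1 = gdist E u w"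
      using interval_first_step V less.prems(3) \<open>u \<noteq> z\<close> by metis
    obtain q where q: "E w q" "gdist E q z + 1 = gdist E w z"
      "z \<in> interval V E q u" "gdist E q u + 1 = gdist E w u"
      using interval_first_step V less.prems(3) \<open>w \<noteq> z\<close> interval_commute by metis
    have "p \<notin> ?W" using less.hyps[of p w z] p less.prems z by auto
    moreover have "q \<notin> ?W"
      using less.hyps[of q u z] q less.prems z gdist_commute V by auto
    moreover have "gdist E p q + 2 \<le> gdist E u w"
    proof -
      have "p \<in> V" "q \<in> V" using p q edge_in_V by auto
      then have "gdist E p q \<le> gdist E p z + gdist E z q"
        using gdist_triangle V by blast
      moreover have "gdist E z q = gdist E q z" "gdist E z w = gdist E w z"
        using gdist_commute V \<open>q \<in> V\<close> by auto
      moreover have "gdist E u z + gdist E z w = gdist E u w"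
        using less.prems(3) by (simp add: mem_interval)
      ultimately show ?thesis using p(2) q(2) by linarith
    qed
    ultimately show False using halfspace_no_reentry ab less.prems p q by blast
  qed
qed

lemma halfspace_eq_if_edge_crosses:
  assumes ab: "E a b" and xy: "E x y"
    and x: "x \<in> halfspace V E a b" and y: "y \<notin> halfspace V E a b"
  shows "halfspace V E a b = halfspace V E x y"
proof (intro set_eqI iffI)
  fix w assume w: "w \<in> halfspace V E a b"
  show "w \<in> halfspace V E x y"
  proof (rule ccontr)
    assume "w \<notin> halfspace V E x y"
    moreover have "w \<in> V" using w by (simp add: halfspace_def)
    ultimately have "y \<in> interval V E w x"
      using Diff_halfspace[OF xy] halfspace_iff_interval[OF edge_sym[OF xy]] by blast
    then show False using halfspace_convex[OF ab w x] y by blast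
  qed
next
  fix w assume w: "w \<in> halfspace V E x y"
  show "w \<in> halfspace V E a b"
  proof (rule ccontr)
    assume "w \<notin> halfspace V E a b"
    then have "w \<in> halfspace V E b a" "y \<in> halfspace V E b a"
      using w y edge_in_V[OF xy] Diff_halfspace[OF ab] by (auto simp: halfspace_def)
    moreover have "x \<in> interval V E w y"
      using w halfspace_iff_interval[OF xy] by (auto simp: halfspace_def)
    ultimately show False
      using halfspace_convex[OF edge_sym[OF ab]] x Diff_halfspace[OF ab] by blast
  qed
qed

text \<open>Induction on the distance to a vertex \<open>b\<^sub>0\<close> outside \<open>s 0\<close>: a vertex in every \<open>s n\<close>
  has a neighbour closer to \<open>b\<^sub>0\<close>, which leaves some \<open>s N\<close>; then the edge between them crosses
  both \<open>s N\<close> and \<open>s (Suc N)\<close>, which are therefore equal.\<close>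
lemma descending_halfspaces_Inter_empty:
  assumes s: "\<And>n. s n \<in> halfspaces V E" and dec: "\<And>n. s (Suc n) \<subset> s n"
  shows "(\<Inter>n. s n) = {}"
proof -
  obtain a0 b0 where ab0: "E a0 b0" "s 0 = halfspace V E a0 b0"
    using s[of 0] unfolding halfspaces_eq by blast
  then have b0: "b0 \<in> V" "b0 \<notin> s 0"
    using edge_in_V[OF ab0(1)] by (auto simp: halfspace_def)
  have "v \<notin> (\<Inter>n. s n)" if "gdist E v b0 = k" for v k
    using that
  proof (induction k arbitrary: v)
    case 0
    show ?case
    proof
      assume "v \<in> (\<Inter>n. s n)"
      then have "v \<in> s 0" by blast
      then have "v = b0" using gdist_eq_0D[OF _ b0(1) 0] halfspaces_subset[OF s] by blast
      then show False using \<open>v \<in> s 0\<close> b0(2) by blast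
    qed
  next
    case (Suc k)
    show ?case
    proof
      assume v: "v \<in> (\<Inter>n. s n)"
      then have "v \<in> s 0" by blast
      then have "v \<in> V" "v \<noteq> b0" using b0(2) halfspaces_subset[OF s] by auto
      then obtain p where p: "E v p" "gdist E p b0 + 1 = gdist E v b0"
        using gdist_first_step b0 by blast
      then obtain N where "p \<notin> s N" using Suc by auto
      then have "p \<notin> s (Suc N)" using dec[of N] by blast
      have "s n = halfspace V E v p" if "p \<notin> s n" for n
      proof -
        obtain a b where ab: "E a b" "s n = halfspace V E a b"
          using s[of n] unfolding halfspaces_eq by blast
        moreover have "v \<in> s n" using v by blast
        ultimately show ?thesis using halfspace_eq_if_edge_crosses[OF ab(1) p(1)] that by simp
      qed
      then have "s (Suc N) = s N" using \<open>p \<notin> s N\<close> \<open>p \<notin> s (Suc N)\<close> by metis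
      then show False using dec[of N] by simp
    qed
  qed
  then show ?thesis by blast
qed

lemma roller_agrees_on_pair:
  assumes "\<xi> \<in> roller V E" "h \<in> halfspaces V E" "k \<in> halfspaces V E"
  obtains v where "v \<in> V" "h \<in> \<xi> \<longleftrightarrow> v \<in> h" "k \<in> \<xi> \<longleftrightarrow> v \<in> k"
proof -
  have "\<forall>F. finite F \<and> F \<subseteq> halfspaces V E \<longrightarrow> (\<exists>v\<in>V. \<xi> \<inter> F = Uv V E v \<inter> F)"
    using assms(1) by (simp add: roller_def)
  then obtain v where v: "v \<in> V" and eq: "\<xi> \<inter> {h, k} = Uv V E v \<inter> {h, k}"
    using assms(2,3) by (meson empty_subsetI finite.emptyI finite_insert insert_subset)
  have iff: "x \<in> \<xi> \<longleftrightarrow> v \<in> x" if "x \<in> {h, k}" for x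
  proof -
    have "x \<in> \<xi> \<inter> {h, k} \<longleftrightarrow> x \<in> Uv V E v \<inter> {h, k}" using eq by simp
    then show ?thesis using that assms(2,3) by (auto simp: Uv_def)
  qed
  show ?thesis by (rule that[OF v]) (simp_all add: iff)
qed

lemma roller_subset_halfspaces: "\<xi> \<in> roller V E \<Longrightarrow> \<xi> \<subseteq> halfspaces V E"
  by (simp add: roller_def)

lemma roller_disjoint:
  assumes "\<xi> \<in> roller V E" "h \<in> \<xi>" "k \<in> \<xi>"
  shows "h \<inter> k \<noteq> {}"
proof -
  have "h \<in> halfspaces V E" "k \<in> halfspaces V E"
    using assms roller_subset_halfspaces by blast+
  then obtain v where "v \<in> V" "h \<in> \<xi> \<longleftrightarrow> v \<in> h" "k \<in> \<xi> \<longleftrightarrow> v \<in> k"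
    by (rule roller_agrees_on_pair[OF assms(1)])
  then show ?thesis using assms(2,3) by blast
qed

lemma roller_upward_closed:
  assumes "\<xi> \<in> roller V E" "h \<in> \<xi>" "h \<subseteq> k" "k \<in> halfspaces V E"
  shows "k \<in> \<xi>"
proof -
  have "h \<in> halfspaces V E" using assms roller_subset_halfspaces by blast
  then obtain v where "v \<in> V" "h \<in> \<xi> \<longleftrightarrow> v \<in> h" "k \<in> \<xi> \<longleftrightarrow> v \<in> k"
    by (rule roller_agrees_on_pair[OF assms(1) _ assms(4)])
  then show ?thesis using assms(2,3) by blast
qed

lemma roller_Diff_halfspace:
  assumes "\<xi> \<in> roller V E" "h \<in> halfspaces V E" "h \<notin> \<xi>"
  shows "V - h \<in> \<xi>"
proof -
  obtain v where "v \<in> V" "h \<in> \<xi> \<longleftrightarrow> v \<in> h" "V - h \<in> \<xi> \<longleftrightarrow> v \<in> V - h"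
    by (rule roller_agrees_on_pair[OF assms(1,2) Diff_halfspaces[OF assms(2)]])
  then show ?thesis using assms(3) by blast
qed

context
  fixes s :: "nat \<Rightarrow> 'v set"
  assumes s: "\<And>n. s n \<in> halfspaces V E" and dec: "\<And>n. s (Suc n) \<subset> s n"
    and ss: "\<And>n. strongly_separated V E (s n) (s (Suc n))"
begin

lemma chain_antimono: "m \<le> n \<Longrightarrow> s n \<subseteq> s m"
  using lift_Suc_antimono_le[of s] dec by blast

text \<open>Otherwise \<open>h\<close> would be transverse to two consecutive members of the chain: neither
  \<open>h\<close> nor its complement can lie in all \<open>s n\<close>, since the chain has empty intersection.\<close>
lemma chain_nested_or_disjoint:
  assumes h: "h \<in> halfspaces V E"
  obtains n where "s n \<subseteq> h \<or> s n \<inter> h = {}"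
proof (rule ccontr)
  assume "\<not> thesis"
  then have meets: "\<not> s n \<subseteq> h" "s n \<inter> h \<noteq> {}" for n using that by blast+
  have Inter: "(\<Inter>n. s n) = {}" using descending_halfspaces_Inter_empty s dec by blast
  obtain a where a: "\<not> h \<subseteq> s a"
    using halfspaces_nonempty[OF h] Inter by blast
  obtain b where b: "\<not> V - h \<subseteq> s b"
    using halfspaces_nonempty[OF Diff_halfspaces[OF h]] Inter by blast
  have "transverse V h (s n)" if "a + b \<le> n" for n
  proof -
    have "\<not> h \<subseteq> s n" "\<not> V - h \<subseteq> s n"
      using a b chain_antimono[of a n] chain_antimono[of b n] that by auto
    then show ?thesis
      using meets[of n] halfspaces_subset[OF h] halfspaces_subset[OF s] unfolding transverse_def
      by blast
  qed
  then have "transverse V h (s (a + b))" "transverse V h (s (Suc (a + b)))" by simp_all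
  then show False using ss[of "a + b"] h unfolding strongly_separated_def by blast
qed

lemma chain_eventually_nested_or_disjoint:
  assumes "h \<in> halfspaces V E"
  shows "\<forall>\<^sub>F n in sequentially. s n \<subseteq> h \<or> s n \<inter> h = {}"
proof -
  obtain N where "s N \<subseteq> h \<or> s N \<inter> h = {}" by (rule chain_nested_or_disjoint[OF assms])
  then have "s n \<subseteq> h \<or> s n \<inter> h = {}" if "N \<le> n" for n using chain_antimono[OF that] by blast
  then show ?thesis by (rule eventually_sequentiallyI)
qed

lemma chain_limit_in_roller: "chain_limit V E s \<in> roller V E"
  unfolding roller_def
proof (intro CollectI conjI allI impI)
  show "chain_limit V E s \<subseteq> halfspaces V E" by (auto simp: chain_limit_def)
  fix F assume "finite F \<and> F \<subseteq> halfspaces V E"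
  then have F: "finite F" "F \<subseteq> halfspaces V E" by blast+
  then have "\<forall>h\<in>F. \<forall>\<^sub>F n in sequentially. s n \<subseteq> h \<or> s n \<inter> h = {}"
    by (intro ballI chain_eventually_nested_or_disjoint) blast
  then have "\<forall>\<^sub>F n in sequentially. \<forall>h\<in>F. s n \<subseteq> h \<or> s n \<inter> h = {}"
    by (rule eventually_ball_finite[OF F(1)])
  then obtain N where N: "\<And>h. h \<in> F \<Longrightarrow> s N \<subseteq> h \<or> s N \<inter> h = {}"
    unfolding eventually_sequentially by blast
  obtain v where v: "v \<in> s N" using halfspaces_nonempty[OF s] by blast
  have "h \<in> chain_limit V E s \<longleftrightarrow> v \<in> h" if "h \<in> F" for h
  proof
    assume "h \<in> chain_limit V E s"
    then obtain n where "s n \<subseteq> h" by (auto simp: chain_limit_def)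
    then have "s (max n N) \<subseteq> s N \<inter> h"
      using chain_antimono[of n "max n N"] chain_antimono[of N "max n N"] by auto
    then have "s N \<subseteq> h" using N[OF that] halfspaces_nonempty[OF s, of "max n N"] by blast
    then show "v \<in> h" using v by blast
  next
    assume "v \<in> h"
    then have "s N \<subseteq> h" using N[OF that] v by blast
    then show "h \<in> chain_limit V E s" using F that by (auto simp: chain_limit_def)
  qed
  then have "chain_limit V E s \<inter> F = Uv V E v \<inter> F" using F by (auto simp: Uv_def)
  moreover have "v \<in> V" using v halfspaces_subset[OF s] by blast
  ultimately show "\<exists>v\<in>V. chain_limit V E s \<inter> F = Uv V E v \<inter> F" by blast
qed

lemma roller_eq_chain_limit:
  assumes "\<eta> \<in> roller V E" "\<And>n. s n \<in> \<eta>"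
  shows "\<eta> = chain_limit V E s"
proof (intro set_eqI iffI)
  fix h assume h: "h \<in> \<eta>"
  then have hH: "h \<in> halfspaces V E" using roller_subset_halfspaces[OF assms(1)] by blast
  obtain n where n: "s n \<subseteq> h \<or> s n \<inter> h = {}" by (rule chain_nested_or_disjoint[OF hH])
  have "s n \<inter> h \<noteq> {}" using roller_disjoint[OF assms(1,2) h] .
  then have "s n \<subseteq> h" using n by blast
  then show "h \<in> chain_limit V E s" using hH by (auto simp: chain_limit_def)
next
  fix h assume "h \<in> chain_limit V E s"
  then obtain n where "s n \<subseteq> h" "h \<in> halfspaces V E" by (auto simp: chain_limit_def)
  then show "h \<in> \<eta>" using roller_upward_closed[OF assms(1,2)] by blast
qed

lemma Inter_hs_ext_chain: "(\<Inter>n. hs_ext V E (s n)) = {chain_limit V E s}"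
proof (intro set_eqI iffI)
  fix \<eta> assume "\<eta> \<in> (\<Inter>n. hs_ext V E (s n))"
  then have "\<eta> \<in> roller V E" "\<And>n. s n \<in> \<eta>" by (auto simp: hs_ext_def)
  then show "\<eta> \<in> {chain_limit V E s}" using roller_eq_chain_limit by blast
next
  fix \<eta> assume "\<eta> \<in> {chain_limit V E s}"
  moreover have "s n \<in> chain_limit V E s" for n using s by (auto simp: chain_limit_def)
  ultimately show "\<eta> \<in> (\<Inter>n. hs_ext V E (s n))"
    using chain_limit_in_roller by (simp add: hs_ext_def)
qed

end

lemma regular_points_separated_by_halfspace:
  assumes r1: "\<xi>1 \<in> regular_points V E" and r2: "\<xi>2 \<in> regular_points V E"
    and h: "h \<in> \<xi>1" "h \<notin> \<xi>2"
  obtains h1 h2 where "h1 \<in> halfspaces V E" "h2 \<in> halfspaces V E" "h1 \<inter> h2 = {}"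
    "strongly_separated V E h1 h2" "\<xi>1 \<in> hs_ext V E h1" "\<xi>2 \<in> hs_ext V E h2"
proof -
  have roller: "\<xi>1 \<in> roller V E" "\<xi>2 \<in> roller V E"
    using r1 r2 by (auto simp: regular_points_def roller_boundary_def)
  then have "h \<in> halfspaces V E" using h roller_subset_halfspaces by blast
  then have "V - h \<in> \<xi>2" using roller_Diff_halfspace roller h by blast
  obtain k1 where k1: "k1 \<in> \<xi>1" "k1 \<subseteq> h" "strongly_separated V E k1 h"
    using regular_point_strongly_separated_subset r1 h by blast
  obtain k2 where k2: "k2 \<in> \<xi>2" "k2 \<subseteq> V - h"
    using regular_point_strongly_separated_subset r2 \<open>V - h \<in> \<xi>2\<close> by blast
  have "strongly_separated V E k1 k2" using strongly_separated_if_opposite_sides k1 k2 by blast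
  moreover have "k1 \<in> halfspaces V E" "k2 \<in> halfspaces V E"
    using k1 k2 roller roller_subset_halfspaces by blast+
  moreover have "k1 \<inter> k2 = {}" using k1 k2 by blast
  ultimately show ?thesis using that k1 k2 roller by (simp add: hs_ext_def)
qed

lemma regular_points_strongly_separated:
  assumes r1: "\<xi>1 \<in> regular_points V E" and r2: "\<xi>2 \<in> regular_points V E" and "\<xi>1 \<noteq> \<xi>2"
  obtains h1 h2 where "h1 \<in> halfspaces V E" "h2 \<in> halfspaces V E" "h1 \<inter> h2 = {}"
    "strongly_separated V E h1 h2" "\<xi>1 \<in> hs_ext V E h1" "\<xi>2 \<in> hs_ext V E h2"
proof -
  obtain h where "h \<in> \<xi>1 \<and> h \<notin> \<xi>2 \<or> h \<in> \<xi>2 \<and> h \<notin> \<xi>1" using assms(3) by blast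
  then show ?thesis
  proof
    assume "h \<in> \<xi>1 \<and> h \<notin> \<xi>2"
    then show ?thesis using regular_points_separated_by_halfspace[OF r1 r2] that by blast
  next
    assume "h \<in> \<xi>2 \<and> h \<notin> \<xi>1"
    then obtain h1 h2 where "h1 \<in> halfspaces V E" "h2 \<in> halfspaces V E" "h1 \<inter> h2 = {}"
      "strongly_separated V E h1 h2" "\<xi>2 \<in> hs_ext V E h1" "\<xi>1 \<in> hs_ext V E h2"
      using regular_points_separated_by_halfspace[OF r2 r1] by blast
    moreover have "h2 \<inter> h1 = {}" "strongly_separated V E h2 h1"
      using calculation strongly_separated_commute by blast+
    ultimately show ?thesis using that[of h2 h1] by blast
  qed
qed

end

theorem corollary7p5:
  fixes V :: "'v set" and E :: "'v \<Rightarrow> 'v \<Rightarrow> bool"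
  assumes "median_graph V E"
    and "countable V"
    and "finite_dimensional V E"
    and "irreducible_cc V E"
  shows "(\<forall>s :: nat \<Rightarrow> 'v set.
            (\<forall>n. s n \<in> halfspaces V E) \<and> (\<forall>n. s (Suc n) \<subset> s n) \<and>
            (\<forall>i j. i \<noteq> j \<longrightarrow> strongly_separated V E (s i) (s j))
          \<longrightarrow> (\<exists>\<xi>. (\<Inter>n. hs_ext V E (s n)) = {\<xi>}))
       \<and> (\<forall>\<xi>1\<in>regular_points V E. \<forall>\<xi>2\<in>regular_points V E. \<xi>1 \<noteq> \<xi>2 \<longrightarrow>
            (\<exists>h1\<in>halfspaces V E. \<exists>h2\<in>halfspaces V E.
               h1 \<inter> h2 = {} \<and> strongly_separated V E h1 h2 \<and>
               \<xi>1 \<in> hs_ext V E h1 \<and> \<xi>2 \<in> hs_ext V E h2))"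
proof (intro conjI allI impI ballI)
  fix s :: "nat \<Rightarrow> 'v set"
  assume "(\<forall>n. s n \<in> halfspaces V E) \<and> (\<forall>n. s (Suc n) \<subset> s n) \<and>
    (\<forall>i j. i \<noteq> j \<longrightarrow> strongly_separated V E (s i) (s j))"
  then have "(\<Inter>n. hs_ext V E (s n)) = {chain_limit V E s}"
    using Inter_hs_ext_chain[OF assms(1), of s] by simp
  then show "\<exists>\<xi>. (\<Inter>n. hs_ext V E (s n)) = {\<xi>}" ..
next
  fix \<xi>1 \<xi>2
  assume "\<xi>1 \<in> regular_points V E" "\<xi>2 \<in> regular_points V E" "\<xi>1 \<noteq> \<xi>2"
  then obtain h1 h2 where "h1 \<in> halfspaces V E" "h2 \<in> halfspaces V E" "h1 \<inter> h2 = {}"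
    "strongly_separated V E h1 h2" "\<xi>1 \<in> hs_ext V E h1" "\<xi>2 \<in> hs_ext V E h2"
    by (rule regular_points_strongly_separated[OF assms(1)])
  then show "\<exists>h1\<in>halfspaces V E. \<exists>h2\<in>halfspaces V E.
      h1 \<inter> h2 = {} \<and> strongly_separated V E h1 h2 \<and> \<xi>1 \<in> hs_ext V E h1 \<and> \<xi>2 \<in> hs_ext V E h2"
    by blast
qed

end
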